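(* Let $l\ge1$, let $G$ be an $l$-step nilpotent group and let $S$ be a symmetric subset of $G$. Then for every $h\in G$ and every $g$ in the subgroup $\langle S\rangle$ generated by $S$, the commutator $[g,h]$ can be written as a product of iterated commutators $[x_1,\dots,x_i]$ with $i\le l$, where $x_j\in S\cup\{h,h^{-1}\}$ for each $j=1,\dots,i$, and in each such iterated commutator at least one $x_j$ lies in $\{h,h^{-1}\}$.
   Context: For group elements, $[y,z]=yzy^{-1}z^{-1}$, and the iterated commutator is $[x_1,\dots,x_i]=[x_1,[x_2,\dots,[x_{i-1},x_i]\dots]]$ for $i\ge2$. The descending central series is $C^0(G)=G$, $C^{j+1}(G)=[G,C^j(G)]$, and $G$ is $l$-step nilpotent if $C^l(G)=\{1\}$ and $C^{l-1}(G)\ne\{1\}$. *)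

theory Defs
  imports "HOL-Algebra.Algebra"
begin

definition comm :: "('a, 'b) monoid_scheme \<Rightarrow> 'a \<Rightarrow> 'a \<Rightarrow> 'a" where
  "comm G y z = y \<otimes>\<^bsub>G\<^esub> z \<otimes>\<^bsub>G\<^esub> inv\<^bsub>G\<^esub> y \<otimes>\<^bsub>G\<^esub> inv\<^bsub>G\<^esub> z"

text \<open>Iterated commutator [x1,...,xi] = [x1,[x2,...,[x(i-1),xi]...]]
  (only used for lists of length at least 2).\<close>
fun iter_comm :: "('a, 'b) monoid_scheme \<Rightarrow> 'a list \<Rightarrow> 'a" where
  "iter_comm G [] = \<one>\<^bsub>G\<^esub>"
| "iter_comm G [x] = x"
| "iter_comm G (x # y # xs) = comm G x (iter_comm G (y # xs))"

fun lower_central :: "('a, 'b) monoid_scheme \<Rightarrow> nat \<Rightarrow> 'a set" where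
  "lower_central G 0 = carrier G"
| "lower_central G (Suc j) =
     generate G {comm G x y | x y. x \<in> carrier G \<and> y \<in> lower_central G j}"

definition nilpotent_step :: "('a, 'b) monoid_scheme \<Rightarrow> nat \<Rightarrow> bool" where
  "nilpotent_step G l \<longleftrightarrow>
     lower_central G l = {\<one>\<^bsub>G\<^esub>} \<and> lower_central G (l - 1) \<noteq> {\<one>\<^bsub>G\<^esub>}"

definition symmetric_subset :: "('a, 'b) monoid_scheme \<Rightarrow> 'a set \<Rightarrow> bool" where
  "symmetric_subset G S \<longleftrightarrow> S \<subseteq> carrier G \<and> (\<forall>s\<in>S. inv\<^bsub>G\<^esub> s \<in> S)"

definition list_prod :: "('a, 'b) monoid_scheme \<Rightarrow> 'a list \<Rightarrow> 'a" where
  "list_prod G xs = foldr (\<lambda>x y. x \<otimes>\<^bsub>G\<^esub> y) xs \<one>\<^bsub>G\<^esub>"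

end

theory Submission
  imports Defs
begin

text \<open>
  Call a word over \<open>S \<union> {h, h\<inverse>}\<close> marked if one of its letters is \<open>h\<^sup>\<plusminus>\<^sup>1\<close>, and consider the set \<open>P\<close>
  of products of iterated commutators of marked words of length at least 2. It is a submonoid,
  and it is closed under conjugation by every \<open>x \<in> S\<close>: for a marked word \<open>w\<close> one has
  \<open>x [w] x\<inverse> = [x, [w]] [w]\<close>, and \<open>x # w\<close> is again marked. Hence \<open>P\<close> is invariant under
  conjugation by \<open>\<langle>S\<rangle>\<close>, and \<open>[g\<^sub>1 g\<^sub>2, h] = g\<^sub>1 [g\<^sub>2, h] g\<^sub>1\<inverse> [g\<^sub>1, h]\<close> shows by induction over \<open>\<langle>S\<rangle>\<close>
  that \<open>[g, h] \<in> P\<close>. Finally an iterated commutator of length \<open>i\<close> lies in \<open>C\<^sup>i\<^sup>-\<^sup>1(G)\<close>, so all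
  factors of length greater than \<open>l\<close> are trivial and can be dropped (only \<open>C\<^sup>l(G) = 1\<close> is
  used, not \<open>l \<ge> 1\<close> or \<open>C\<^sup>l\<^sup>-\<^sup>1(G) \<noteq> 1\<close>).
\<close>

definition marked_word :: "'a set \<Rightarrow> 'a set \<Rightarrow> 'a list \<Rightarrow> bool" where
  "marked_word A H xs \<longleftrightarrow> 2 \<le> length xs \<and> set xs \<subseteq> A \<and> set xs \<inter> H \<noteq> {}"

definition comm_products :: "('a, 'b) monoid_scheme \<Rightarrow> 'a set \<Rightarrow> 'a set \<Rightarrow> 'a set" where
  "comm_products G A H =
     {list_prod G (map (iter_comm G) cs) | cs. \<forall>xs \<in> set cs. marked_word A H xs}"

lemma marked_word_Cons:
  "marked_word A H xs \<Longrightarrow> x \<in> A \<Longrightarrow> marked_word A H (x # xs)"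
  by (auto simp: marked_word_def)

context group
begin

lemma comm_closed [simp]:
  "x \<in> carrier G \<Longrightarrow> y \<in> carrier G \<Longrightarrow> comm G x y \<in> carrier G"
  by (simp add: comm_def)

lemma iter_comm_closed: "set xs \<subseteq> carrier G \<Longrightarrow> iter_comm G xs \<in> carrier G"
  by (induction xs rule: induct_list012) simp_all

lemma list_prod_Nil [simp]: "list_prod G [] = \<one>"
  by (simp add: list_prod_def)

lemma list_prod_Cons [simp]: "list_prod G (x # xs) = x \<otimes> list_prod G xs"
  by (simp add: list_prod_def)

lemma list_prod_closed: "set xs \<subseteq> carrier G \<Longrightarrow> list_prod G xs \<in> carrier G"
  by (induction xs) simp_all

lemma list_prod_append:
  "set xs \<subseteq> carrier G \<Longrightarrow> set ys \<subseteq> carrier G \<Longrightarrow>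
   list_prod G (xs @ ys) = list_prod G xs \<otimes> list_prod G ys"
  by (induction xs) (auto simp: m_assoc list_prod_closed)

lemma list_prod_map_filter:
  assumes "\<And>c. c \<in> set cs \<Longrightarrow> \<not> P c \<Longrightarrow> f c = \<one>"
    and "f ` set cs \<subseteq> carrier G"
  shows "list_prod G (map f (filter P cs)) = list_prod G (map f cs)"
  using assms by (induction cs) (auto simp: list_prod_closed)

lemma mult_inv_cancel_left: "x \<in> carrier G \<Longrightarrow> y \<in> carrier G \<Longrightarrow> x \<otimes> (inv x \<otimes> y) = y"
  by (simp add: m_assoc[symmetric])

lemma inv_mult_cancel_left: "x \<in> carrier G \<Longrightarrow> y \<in> carrier G \<Longrightarrow> inv x \<otimes> (x \<otimes> y) = y"
  by (simp add: m_assoc[symmetric])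

lemma comm_mult_conj: "x \<in> carrier G \<Longrightarrow> c \<in> carrier G \<Longrightarrow> comm G x c \<otimes> c = x \<otimes> c \<otimes> inv x"
  by (simp add: comm_def m_assoc)

lemma comm_mult_left:
  assumes "x \<in> carrier G" "y \<in> carrier G" "h \<in> carrier G"
  shows "comm G (x \<otimes> y) h = x \<otimes> comm G y h \<otimes> inv x \<otimes> comm G x h"
  using assms
  by (simp add: comm_def m_assoc inv_mult_group mult_inv_cancel_left inv_mult_cancel_left)

lemma iter_comm_marked_closed:
  "A \<subseteq> carrier G \<Longrightarrow> marked_word A H xs \<Longrightarrow> iter_comm G xs \<in> carrier G"
  unfolding marked_word_def by (blast intro: iter_comm_closed)

lemma list_prod_iter_comm_closed:
  assumes "A \<subseteq> carrier G" "\<forall>xs \<in> set cs. marked_word A H xs"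
  shows "list_prod G (map (iter_comm G) cs) \<in> carrier G"
  using assms(2) iter_comm_marked_closed[OF assms(1)] by (intro list_prod_closed) auto

lemma comm_products_subset:
  assumes "A \<subseteq> carrier G"
  shows "comm_products G A H \<subseteq> carrier G"
  using list_prod_iter_comm_closed[OF assms] by (auto simp: comm_products_def)

lemma one_in_comm_products: "\<one> \<in> comm_products G A H"
  unfolding comm_products_def by (intro CollectI exI[of _ "[]"]) simp

lemma iter_comm_in_comm_products:
  "A \<subseteq> carrier G \<Longrightarrow> marked_word A H xs \<Longrightarrow> iter_comm G xs \<in> comm_products G A H"
  unfolding comm_products_def
  by (intro CollectI exI[of _ "[xs]"]) (simp add: iter_comm_marked_closed)

lemma comm_products_mult:
  assumes A: "A \<subseteq> carrier G"
    and "p \<in> comm_products G A H" "q \<in> comm_products G A H"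
  shows "p \<otimes> q \<in> comm_products G A H"
proof -
  obtain cs ds where
    cs: "\<forall>xs \<in> set cs. marked_word A H xs" "p = list_prod G (map (iter_comm G) cs)" and
    ds: "\<forall>xs \<in> set ds. marked_word A H xs" "q = list_prod G (map (iter_comm G) ds)"
    using assms(2,3) unfolding comm_products_def by blast
  have "set (map (iter_comm G) es) \<subseteq> carrier G" if "\<forall>xs \<in> set es. marked_word A H xs" for es
    using that iter_comm_marked_closed[OF A] by auto
  then have "p \<otimes> q = list_prod G (map (iter_comm G) (cs @ ds))"
    using cs ds by (simp add: list_prod_append)
  then show ?thesis
    using cs(1) ds(1) unfolding comm_products_def by (intro CollectI exI[of _ "cs @ ds"]) auto
qed

lemma conj_iter_comm_in_comm_products:
  assumes A: "A \<subseteq> carrier G" and x: "x \<in> A" and w: "marked_word A H xs"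
  shows "x \<otimes> iter_comm G xs \<otimes> inv x \<in> comm_products G A H"
proof -
  obtain y ys where xs: "xs = y # ys" "ys \<noteq> []"
    using w by (cases xs; cases "tl xs") (auto simp: marked_word_def)
  have "iter_comm G xs \<in> carrier G" "x \<in> carrier G"
    using A x w by (auto simp: iter_comm_marked_closed)
  then have "x \<otimes> iter_comm G xs \<otimes> inv x = iter_comm G (x # xs) \<otimes> iter_comm G xs"
    using xs by (cases ys) (auto simp: comm_mult_conj)
  then show ?thesis
    using A x w by (simp add: comm_products_mult iter_comm_in_comm_products marked_word_Cons)
qed

lemma conj_comm_products:
  assumes A: "A \<subseteq> carrier G" and x: "x \<in> A" and p: "p \<in> comm_products G A H"
  shows "x \<otimes> p \<otimes> inv x \<in> comm_products G A H"
proof -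
  obtain cs where cs: "\<forall>xs \<in> set cs. marked_word A H xs" "p = list_prod G (map (iter_comm G) cs)"
    using p unfolding comm_products_def by blast
  have xc: "x \<in> carrier G" using A x by blast
  from cs(1) have "x \<otimes> list_prod G (map (iter_comm G) cs) \<otimes> inv x \<in> comm_products G A H"
  proof (induction cs)
    case Nil
    then show ?case using xc by (simp add: one_in_comm_products)
  next
    case (Cons xs cs)
    let ?c = "iter_comm G xs" and ?q = "list_prod G (map (iter_comm G) cs)"
    have "?c \<in> carrier G" "?q \<in> carrier G"
      using Cons.prems iter_comm_marked_closed[OF A] list_prod_iter_comm_closed[OF A] by auto
    then have "x \<otimes> (?c \<otimes> ?q) \<otimes> inv x = (x \<otimes> ?c \<otimes> inv x) \<otimes> (x \<otimes> ?q \<otimes> inv x)"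
      using xc by (simp add: m_assoc inv_mult_cancel_left)
    then show ?case
      using Cons A x by (simp add: comm_products_mult conj_iter_comm_in_comm_products)
  qed
  then show ?thesis using cs(2) by simp
qed

lemma conj_generate_comm_products:
  assumes A: "A \<subseteq> carrier G" and S: "symmetric_subset G S" "S \<subseteq> A"
    and g: "g \<in> generate G S" and p: "p \<in> comm_products G A H"
  shows "g \<otimes> p \<otimes> inv g \<in> comm_products G A H"
  using g p
proof (induction arbitrary: p rule: generate.induct)
  case one
  then have "p \<in> carrier G" using comm_products_subset[OF A] by blast
  then show ?case using one by simp
next
  case (incl x)
  then show ?case using A S by (auto intro: conj_comm_products)
next
  case (inv x)
  then show ?case using A S by (auto simp: symmetric_subset_def intro: conj_comm_products)
next
  case (eng g1 g2)
  have "S \<subseteq> carrier G" using S(1) by (simp add: symmetric_subset_def)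
  then have "g1 \<in> carrier G" "g2 \<in> carrier G"
    using eng.hyps generate_incl by auto
  moreover have "p \<in> carrier G"
    using eng.prems comm_products_subset[OF A] by blast
  ultimately have "g1 \<otimes> g2 \<otimes> p \<otimes> inv (g1 \<otimes> g2) = g1 \<otimes> (g2 \<otimes> p \<otimes> inv g2) \<otimes> inv g1"
    by (simp add: m_assoc inv_mult_group)
  then show ?case using eng.IH eng.prems by simp
qed

lemma comm_generate_in_comm_products:
  assumes A: "A \<subseteq> carrier G" and S: "symmetric_subset G S" "S \<subseteq> A"
    and h: "h \<in> A" "h \<in> H" and g: "g \<in> generate G S"
  shows "comm G g h \<in> comm_products G A H"
  using g
proof (induction rule: generate.induct)
  case one
  then show ?case using A h by (simp add: comm_def one_in_comm_products subset_iff)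
next
  case (incl x)
  then have "marked_word A H [x, h]" using S h by (auto simp: marked_word_def)
  then show ?case using iter_comm_in_comm_products[OF A] by fastforce
next
  case (inv x)
  then have "marked_word A H [inv x, h]"
    using S h by (auto simp: marked_word_def symmetric_subset_def)
  then show ?case using iter_comm_in_comm_products[OF A] by fastforce
next
  case (eng g1 g2)
  have "S \<subseteq> carrier G" using S(1) by (simp add: symmetric_subset_def)
  then have "g1 \<in> carrier G" "g2 \<in> carrier G" "h \<in> carrier G"
    using eng.hyps generate_incl A h by auto
  then have "comm G (g1 \<otimes> g2) h = (g1 \<otimes> comm G g2 h \<otimes> inv g1) \<otimes> comm G g1 h"
    by (simp add: comm_mult_left)
  moreover have "g1 \<otimes> comm G g2 h \<otimes> inv g1 \<in> comm_products G A H"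
    using conj_generate_comm_products[OF A S eng.hyps(1) eng.IH(2)] .
  ultimately show ?case
    using comm_products_mult[OF A _ eng.IH(1)] by simp
qed

lemma lower_central_Suc_subset: "lower_central G (Suc j) \<subseteq> lower_central G j"
proof (induction j)
  case 0
  have "{comm G x y | x y. x \<in> carrier G \<and> y \<in> carrier G} \<subseteq> carrier G" by auto
  then show ?case by (simp add: generate_incl)
next
  case (Suc j)
  have "{comm G x y | x y. x \<in> carrier G \<and> y \<in> lower_central G (Suc j)}
        \<subseteq> {comm G x y | x y. x \<in> carrier G \<and> y \<in> lower_central G j}"
    using Suc.IH by blast
  then show ?case by (subst (1 2) lower_central.simps(2)) (rule mono_generate)
qed

lemma lower_central_antimono: "j \<le> k \<Longrightarrow> lower_central G k \<subseteq> lower_central G j"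
  using lift_Suc_antimono_le[of "lower_central G"] lower_central_Suc_subset by blast

lemma iter_comm_in_lower_central:
  "set xs \<subseteq> carrier G \<Longrightarrow> xs \<noteq> [] \<Longrightarrow> iter_comm G xs \<in> lower_central G (length xs - 1)"
proof (induction xs rule: induct_list012)
  case (3 x y zs)
  then show ?case by (auto intro!: generate.incl)
qed auto

lemma iter_comm_eq_one_if_long:
  assumes "lower_central G l = {\<one>}" "set xs \<subseteq> carrier G" "l < length xs"
  shows "iter_comm G xs = \<one>"
proof -
  have "iter_comm G xs \<in> lower_central G (length xs - 1)"
    using assms(2,3) by (intro iter_comm_in_lower_central) auto
  also have "\<dots> \<subseteq> lower_central G l"
    using assms(3) by (intro lower_central_antimono) simp
  finally show ?thesis using assms(1) by simp
qed

lemma comm_products_truncate: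
  assumes A: "A \<subseteq> carrier G" and nil: "lower_central G l = {\<one>}"
    and p: "p \<in> comm_products G A H"
  shows "\<exists>cs. (\<forall>xs \<in> set cs. marked_word A H xs \<and> length xs \<le> l)
           \<and> p = list_prod G (map (iter_comm G) cs)"
proof -
  obtain cs where cs: "\<forall>xs \<in> set cs. marked_word A H xs" "p = list_prod G (map (iter_comm G) cs)"
    using p unfolding comm_products_def by blast
  have car: "\<And>xs. xs \<in> set cs \<Longrightarrow> set xs \<subseteq> carrier G"
    using cs(1) A by (auto simp: marked_word_def)
  have "list_prod G (map (iter_comm G) (filter (\<lambda>xs. length xs \<le> l) cs)) = p"
    unfolding cs(2)
    by (rule list_prod_map_filter)
      (auto intro: iter_comm_closed[OF car] iter_comm_eq_one_if_long[OF nil car])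
  then show ?thesis
    using cs(1) by (intro exI[of _ "filter (\<lambda>xs. length xs \<le> l) cs"]) auto
qed

end

theorem lemma2p5p2:
  fixes G :: "('a, 'b) monoid_scheme" and l :: nat and S :: "'a set" and g h :: 'a
  assumes "group G"
    and "l \<ge> 1"
    and "nilpotent_step G l"
    and "symmetric_subset G S"
    and "h \<in> carrier G"
    and "g \<in> generate G S"
  shows "\<exists>cs :: 'a list list.
           (\<forall>xs \<in> set cs. 2 \<le> length xs \<and> length xs \<le> l
                \<and> set xs \<subseteq> S \<union> {h, inv\<^bsub>G\<^esub> h}
                \<and> (\<exists>x \<in> set xs. x \<in> {h, inv\<^bsub>G\<^esub> h}))
         \<and> comm G g h = list_prod G (map (iter_comm G) cs)"
proof -
  interpret group G by fact
  let ?H = "{h, inv\<^bsub>G\<^esub> h}" let ?A = "S \<union> ?H"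
  have A: "?A \<subseteq> carrier G"
    using assms(4,5) by (auto simp: symmetric_subset_def)
  have "comm G g h \<in> comm_products G ?A ?H"
    using comm_generate_in_comm_products[OF A assms(4)] assms(6) by blast
  moreover have "lower_central G l = {\<one>\<^bsub>G\<^esub>}"
    using assms(3) by (simp add: nilpotent_step_def)
  ultimately obtain cs where
    "\<forall>xs \<in> set cs. marked_word ?A ?H xs \<and> length xs \<le> l"
    "comm G g h = list_prod G (map (iter_comm G) cs)"
    using comm_products_truncate[OF A] by blast
  then show ?thesis
    unfolding marked_word_def by (intro exI[of _ cs]) blast
qed

end
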